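(* Let $n\ge 2$, $d\ge 1$, $\tau=1$, and let $\mu^\star_1,\mu^\star_2\stackrel{\mathrm{i.i.d.}}{\sim}\mathcal N(0,I_d)$ and $\xi_1,\dots,\xi_n\stackrel{\mathrm{i.i.d.}}{\sim}\mathcal N(0,\sigma^2 I_d)$, independent, let $z^\star_1,\dots,z^\star_n\in\{1,2\}$ be fixed labels with both classes nonempty, and $x_i=\mu^\star_{z^\star_i}+\xi_i$. Fix $q>1$, $\beta>1$, and suppose $$\sigma=\beta\,\frac{\sqrt n\,q+n-2}{\sqrt2\,\sqrt{\sqrt n\,q+n}}.$$ Then the probability that there exists a $q$-approximately balanced partition of $[n]$ that is not a fixed point of Lloyd's $k$-means update is at most $2^n\,n\,\rho_q^{d/4}$, where $$\rho_q=\frac{\sigma^2(\sqrt n q+n-2)(\sqrt n q+n)(\sqrt n q+n+2)\bigl(\sqrt n(\sigma^2+2)(\sqrt n+q)-4\bigr)}{\bigl(n\sigma^2(\sqrt n+q)^2+(\sqrt n q+n-2)^2\bigr)^2}.$$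
   Context: A bipartition $\{C_1,C_2\}$ of $[n]=\{1,\dots,n\}$ is $q$-approximately balanced if for $k\in\{1,2\}$, $|C_k|>2$ and $\frac n2-q\sqrt{n/4}<|C_k|<\frac n2+q\sqrt{n/4}$. For a partition $\{C_1,C_2\}$ into nonempty sets with centroids $\widehat\mu_j=|C_j|^{-1}\sum_{k\in C_j}x_k$, Lloyd's update reassigns each $x_i$ to the nearest centroid in Euclidean distance; the partition is a fixed point of Lloyd's update if no sample changes cluster, i.e. there is no $i\in C_j$ (with $\overline j$ the other cluster index) such that $\|x_i-\widehat\mu_{\overline j}\|^2<\|x_i-\widehat\mu_j\|^2$. The probability is over the centers and noise. *)

theory Defs
  imports "HOL-Probability.Probability"
begin

text \<open>Standard Gaussian coordinates: index (0,j),(1,j) give the coordinates of the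
  two centers, index (i+1,j) for i in 1..n gives the (unscaled) noise of sample i.\<close>
definition gauss_space :: "nat \<Rightarrow> (nat \<times> 'd::finite \<Rightarrow> real) measure" where
  "gauss_space n = PiM ({..<n+2} \<times> UNIV) (\<lambda>_. density lborel std_normal_density)"

definition center :: "nat \<Rightarrow> (nat \<times> 'd::finite \<Rightarrow> real) \<Rightarrow> real ^ 'd" where
  "center k \<omega> = (\<chi> j. \<omega> (k - 1, j))"

definition noise :: "real \<Rightarrow> nat \<Rightarrow> (nat \<times> 'd::finite \<Rightarrow> real) \<Rightarrow> real ^ 'd" where
  "noise \<sigma> i \<omega> = (\<chi> j. \<sigma> * \<omega> (i + 1, j))"

definition sample :: "real \<Rightarrow> (nat \<Rightarrow> nat) \<Rightarrow> (nat \<times> 'd::finite \<Rightarrow> real) \<Rightarrow> nat \<Rightarrow> real ^ 'd" where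
  "sample \<sigma> z \<omega> i = center (z i) \<omega> + noise \<sigma> i \<omega>"

definition centroid :: "(nat \<Rightarrow> 'a::real_vector) \<Rightarrow> nat set \<Rightarrow> 'a" where
  "centroid x C = (1 / real (card C)) *\<^sub>R (\<Sum>k\<in>C. x k)"

definition approx_balanced :: "nat \<Rightarrow> real \<Rightarrow> nat set \<Rightarrow> nat set \<Rightarrow> bool" where
  "approx_balanced n q C1 C2 \<longleftrightarrow>
     C1 \<union> C2 = {1..n} \<and> C1 \<inter> C2 = {} \<and>
     (\<forall>C\<in>{C1, C2}. card C > 2 \<and>
        real n / 2 - q * sqrt (real n / 4) < real (card C) \<and>
        real (card C) < real n / 2 + q * sqrt (real n / 4))"

definition lloyd_fixed_point :: "(nat \<Rightarrow> 'a::real_normed_vector) \<Rightarrow> nat set \<Rightarrow> nat set \<Rightarrow> bool" where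
  "lloyd_fixed_point x C1 C2 \<longleftrightarrow>
     \<not> ((\<exists>i\<in>C1. (norm (x i - centroid x C2))\<^sup>2 < (norm (x i - centroid x C1))\<^sup>2) \<or>
        (\<exists>i\<in>C2. (norm (x i - centroid x C1))\<^sup>2 < (norm (x i - centroid x C2))\<^sup>2))"

end

theory Submission
  imports Defs
begin

(* The Gaussian coordinates form rows omega_0, ..., omega_(n+1) of R^d: the two centres, then the
   unscaled noises. For a sample i and a cluster C, x_i - centroid C equals sum_k alpha_k omega_k for
   an explicit coefficient vector alpha, so its squared norm is a quadratic form whose moment
   generating function is exactly (1 - 2 kappa |alpha|^2) powr (-d/2). Lloyd's update moves i out of
   its cluster C only if x_i is closer to the centroid of the complement C'. For a q-balanced split,
   with m = sqrt n q + n, the coefficient norm towards C' is at least L = sigma^2 (1 + 2/m) and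
   towards C at most H = sigma^2 (1 - 2/m) + 2 (1 - 2/m)^2, and beta > 1 gives H < L. A Chernoff
   bound, with Cauchy-Schwarz decoupling the two dependent quadratic forms, bounds the probability
   of the move by (4 L H / (L + H)^2) powr (d/4), which is rho_q powr (d/4); a union bound over the
   at most 2^n n pairs (C, i) concludes. *)

abbreviation std_normal :: "real measure" where
  "std_normal \<equiv> density lborel (\<lambda>x. ennreal (std_normal_density x))"

(* The expectation of exp (kappa (P + sqrt v Z)^2) for standard normal Z when 2 kappa v < 1;
   a junk value otherwise. *)
definition sq_gauss_mgf :: "real \<Rightarrow> real \<Rightarrow> real \<Rightarrow> real" where
  "sq_gauss_mgf \<kappa> v P = exp (\<kappa> * P\<^sup>2 / (1 - 2 * \<kappa> * v)) / sqrt (1 - 2 * \<kappa> * v)"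

lemma sq_gauss_mgf_pos: "2 * \<kappa> * v < 1 \<Longrightarrow> sq_gauss_mgf \<kappa> v P > 0"
  by (simp add: sq_gauss_mgf_def)

lemma std_normal_density_mult_exp_square:
  fixes \<kappa> c P y :: real
  assumes a_def: "a = 1 - 2 * \<kappa> * c\<^sup>2" and "a > 0"
  shows "std_normal_density y * exp (\<kappa> * (P + c * y)\<^sup>2)
       = sq_gauss_mgf \<kappa> (c\<^sup>2) P * normal_density (2 * \<kappa> * c * P / a) (1 / sqrt a) y"
proof -
  define m where "m = 2 * \<kappa> * c * P / a"
  have "- y\<^sup>2 / 2 + \<kappa> * (P + c * y)\<^sup>2 = \<kappa> * P\<^sup>2 / a - a * (y - 2 * \<kappa> * c * P / a)\<^sup>2 / 2"
    using assms by (simp add: field_simps power2_eq_square) algebra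
  then have square: "- y\<^sup>2 / 2 + \<kappa> * (P + c * y)\<^sup>2 = \<kappa> * P\<^sup>2 / a + - (a * (y - m)\<^sup>2 / 2)"
    by (simp add: m_def)
  have "normal_density m (1 / sqrt a) y = sqrt a / sqrt (2 * pi) * exp (- (a * (y - m)\<^sup>2 / 2))"
    using \<open>a > 0\<close> by (simp add: normal_density_def real_sqrt_divide power_divide)
  moreover have "std_normal_density y * exp (\<kappa> * (P + c * y)\<^sup>2)
      = exp (\<kappa> * P\<^sup>2 / a) * exp (- (a * (y - m)\<^sup>2 / 2)) / sqrt (2 * pi)"
  proof -
    have "std_normal_density y * exp (\<kappa> * (P + c * y)\<^sup>2)
        = exp (- y\<^sup>2 / 2 + \<kappa> * (P + c * y)\<^sup>2) / sqrt (2 * pi)"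
      by (simp add: std_normal_density_def mult_exp_exp)
    then show ?thesis by (simp only: square exp_add)
  qed
  ultimately show ?thesis
    using \<open>a > 0\<close> by (simp add: sq_gauss_mgf_def flip: a_def m_def)
qed

lemma nn_integral_exp_square_std_normal:
  assumes "2 * \<kappa> * c\<^sup>2 < 1"
  shows "(\<integral>\<^sup>+y. ennreal (exp (\<kappa> * (P + c * y)\<^sup>2)) \<partial>std_normal) = ennreal (sq_gauss_mgf \<kappa> (c\<^sup>2) P)"
proof -
  define a where "a = 1 - 2 * \<kappa> * c\<^sup>2"
  have "a > 0" using assms by (simp add: a_def)
  have "(\<integral>\<^sup>+y. ennreal (exp (\<kappa> * (P + c * y)\<^sup>2)) \<partial>std_normal)
      = (\<integral>\<^sup>+y. ennreal (std_normal_density y * exp (\<kappa> * (P + c * y)\<^sup>2)) \<partial>lborel)"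
    by (simp add: nn_integral_density ennreal_mult)
  also have "\<dots> = (\<integral>\<^sup>+y. ennreal (sq_gauss_mgf \<kappa> (c\<^sup>2) P
                        * normal_density (2 * \<kappa> * c * P / a) (1 / sqrt a) y) \<partial>lborel)"
    by (simp add: std_normal_density_mult_exp_square[OF a_def \<open>a > 0\<close>])
  also have "\<dots> = ennreal (sq_gauss_mgf \<kappa> (c\<^sup>2) P)"
    using \<open>a > 0\<close> less_imp_le[OF sq_gauss_mgf_pos[OF assms]]
      prob_space.emeasure_space_1[OF prob_space_normal_density]
    by (simp add: ennreal_mult nn_integral_cmult emeasure_density)
  finally show ?thesis .
qed

lemma two_mult_less_one_mono:
  fixes \<kappa> v w :: real
  assumes "0 \<le> v" "v \<le> w" "2 * \<kappa> * w < 1"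
  shows "2 * \<kappa> * v < 1"
  by (smt (verit, best) assms mult_mono mult_sign_intros(3))

lemma nn_integral_sq_gauss_mgf_shift:
  assumes "0 \<le> v" and "2 * \<kappa> * (v + c\<^sup>2) < 1"
  shows "(\<integral>\<^sup>+y. ennreal (sq_gauss_mgf \<kappa> v (P + c * y)) \<partial>std_normal) = ennreal (sq_gauss_mgf \<kappa> (v + c\<^sup>2) P)"
proof -
  define a where "a = 1 - 2 * \<kappa> * v"
  have "a > 0"
    using two_mult_less_one_mono[of v "v + c\<^sup>2" \<kappa>] assms by (simp add: a_def)
  have b: "1 - 2 * (\<kappa> / a) * c\<^sup>2 = (1 - 2 * \<kappa> * (v + c\<^sup>2)) / a"
    using \<open>a > 0\<close> by (simp add: a_def field_simps)
  moreover have "(1 - 2 * \<kappa> * (v + c\<^sup>2)) / a > 0"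
    using assms(2) \<open>a > 0\<close> by simp
  ultimately have "2 * (\<kappa> / a) * c\<^sup>2 < 1" by linarith
  have "(\<integral>\<^sup>+y. ennreal (sq_gauss_mgf \<kappa> v (P + c * y)) \<partial>std_normal)
      = (\<integral>\<^sup>+y. ennreal (1 / sqrt a) * ennreal (exp (\<kappa> / a * (P + c * y)\<^sup>2)) \<partial>std_normal)"
    using \<open>a > 0\<close> by (simp add: sq_gauss_mgf_def a_def ennreal_mult' flip: ennreal_mult)
  also have "\<dots> = ennreal (1 / sqrt a) * (\<integral>\<^sup>+y. ennreal (exp (\<kappa> / a * (P + c * y)\<^sup>2)) \<partial>std_normal)"
    by (rule nn_integral_cmult) simp
  also have "\<dots> = ennreal (1 / sqrt a) * ennreal (sq_gauss_mgf (\<kappa> / a) (c\<^sup>2) P)"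
    by (simp only: nn_integral_exp_square_std_normal[OF \<open>2 * (\<kappa> / a) * c\<^sup>2 < 1\<close>])
  also have "\<dots> = ennreal (sq_gauss_mgf \<kappa> (v + c\<^sup>2) P)"
  proof -
    have "sq_gauss_mgf (\<kappa> / a) (c\<^sup>2) P / sqrt a = sq_gauss_mgf \<kappa> (v + c\<^sup>2) P"
      unfolding sq_gauss_mgf_def b using \<open>a > 0\<close> assms(2) by (simp add: real_sqrt_divide)
    then show ?thesis
      using \<open>a > 0\<close> by (subst ennreal_mult'[symmetric]) auto
  qed
  finally show ?thesis .
qed

definition column_form :: "('i \<times> 'j \<Rightarrow> real) \<Rightarrow> ('i \<times> 'j) set \<Rightarrow> ('i \<times> 'j \<Rightarrow> real) \<Rightarrow> 'j \<Rightarrow> real" where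
  "column_form c K \<omega> j = (\<Sum>p\<in>{p\<in>K. snd p = j}. c p * \<omega> p)"

definition column_sqnorm :: "('i \<times> 'j \<Rightarrow> real) \<Rightarrow> ('i \<times> 'j) set \<Rightarrow> 'j \<Rightarrow> real" where
  "column_sqnorm c K j = (\<Sum>p\<in>{p\<in>K. snd p = j}. (c p)\<^sup>2)"

lemma column_sqnorm_nonneg: "column_sqnorm c K j \<ge> 0"
  unfolding column_sqnorm_def by (simp add: sum_nonneg)

lemma column_filter_insert:
  "{p \<in> insert p0 K. snd p = j} = (if j = snd p0 then insert p0 {p \<in> K. snd p = j} else {p \<in> K. snd p = j})"
  by auto

lemma column_sqnorm_insert:
  assumes "finite K" "p0 \<notin> K"
  shows "column_sqnorm c (insert p0 K) j = column_sqnorm c K j + (if j = snd p0 then (c p0)\<^sup>2 else 0)"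
  using assms unfolding column_sqnorm_def column_filter_insert by simp

lemma column_form_insert_upd:
  assumes "finite K" "p0 \<notin> K"
  shows "column_form c (insert p0 K) (x(p0 := y)) j = column_form c K x j + (if j = snd p0 then c p0 * y else 0)"
proof -
  have "(\<Sum>p\<in>{p\<in>K. snd p = j}. c p * (x(p0 := y)) p) = (\<Sum>p\<in>{p\<in>K. snd p = j}. c p * x p)"
    using assms(2) by (intro sum.cong) auto
  then show ?thesis
    using assms unfolding column_form_def column_filter_insert
    by (cases "j = snd p0") (simp_all add: sum.insert fun_upd_same del: fun_upd_apply)
qed

lemma measurable_column_form [measurable]:
  assumes "finite K"
  shows "(\<lambda>\<omega>. column_form c K \<omega> j) \<in> borel_measurable (PiM K (\<lambda>_. std_normal))"
  unfolding column_form_def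
proof (rule borel_measurable_sum)
  fix p assume "p \<in> {p \<in> K. snd p = j}"
  then have "(\<lambda>\<omega>. \<omega> p) \<in> measurable (PiM K (\<lambda>_. std_normal)) std_normal"
    by (intro measurable_component_singleton) simp
  then show "(\<lambda>\<omega>. c p * \<omega> p) \<in> borel_measurable (PiM K (\<lambda>_. std_normal))"
    by (simp cong: measurable_cong_sets)
qed

lemma nn_integral_prod_sq_gauss_mgf_shift:
  fixes s P :: "'j::finite \<Rightarrow> real"
  assumes "\<And>j. 0 \<le> s j" and "\<And>j. 2 * \<kappa> * (s j + (if j = j0 then c\<^sup>2 else 0)) < 1"
  shows "(\<integral>\<^sup>+y. ennreal (\<Prod>j\<in>UNIV. sq_gauss_mgf \<kappa> (s j) (P j + (if j = j0 then c * y else 0))) \<partial>std_normal)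
       = ennreal (\<Prod>j\<in>UNIV. sq_gauss_mgf \<kappa> (s j + (if j = j0 then c\<^sup>2 else 0)) (P j))"
proof -
  define R where "R = (\<Prod>j\<in>UNIV - {j0}. sq_gauss_mgf \<kappa> (s j) (P j))"
  have "2 * \<kappa> * s j < 1" for j
    using two_mult_less_one_mono[of "s j" "s j + (if j = j0 then c\<^sup>2 else 0)" \<kappa>] assms by simp
  then have "R \<ge> 0"
    by (simp add: R_def prod_nonneg less_imp_le[OF sq_gauss_mgf_pos])
  have "(\<integral>\<^sup>+y. ennreal (\<Prod>j\<in>UNIV. sq_gauss_mgf \<kappa> (s j) (P j + (if j = j0 then c * y else 0))) \<partial>std_normal)
      = (\<integral>\<^sup>+y. ennreal (sq_gauss_mgf \<kappa> (s j0) (P j0 + c * y)) * ennreal R \<partial>std_normal)"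
    using \<open>R \<ge> 0\<close> by (simp add: prod.remove[of UNIV j0] R_def flip: ennreal_mult'')
  also have "\<dots> = (\<integral>\<^sup>+y. ennreal (sq_gauss_mgf \<kappa> (s j0) (P j0 + c * y)) \<partial>std_normal) * ennreal R"
    by (rule nn_integral_multc) (unfold sq_gauss_mgf_def, measurable)
  also have "\<dots> = ennreal (sq_gauss_mgf \<kappa> (s j0 + c\<^sup>2) (P j0)) * ennreal R"
    using assms[of j0] by (simp add: nn_integral_sq_gauss_mgf_shift)
  also have "\<dots> = ennreal (\<Prod>j\<in>UNIV. sq_gauss_mgf \<kappa> (s j + (if j = j0 then c\<^sup>2 else 0)) (P j))"
    using \<open>R \<ge> 0\<close> by (simp add: prod.remove[of UNIV j0] R_def flip: ennreal_mult'')
  finally show ?thesis .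
qed

(* Integrating out one coordinate at a time: the remaining ones give the induction hypothesis with
   a shifted P, and the new one adds its squared weight to the variance of its column. *)
lemma nn_integral_exp_column_forms:
  fixes K :: "('i \<times> 'j::finite) set"
  assumes "finite K" and "\<And>j. 2 * \<kappa> * column_sqnorm c K j < 1"
  shows "(\<integral>\<^sup>+\<omega>. ennreal (exp (\<kappa> * (\<Sum>j\<in>UNIV. (P j + column_form c K \<omega> j)\<^sup>2))) \<partial>PiM K (\<lambda>_. std_normal))
       = ennreal (\<Prod>j\<in>UNIV. sq_gauss_mgf \<kappa> (column_sqnorm c K j) (P j))"
  using assms
proof (induction K arbitrary: P rule: finite_induct)
  case empty
  then show ?case
    by (simp add: PiM_empty column_form_def column_sqnorm_def sq_gauss_mgf_def exp_sum sum_distrib_left)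
next
  case (insert p0 K)
  interpret product_sigma_finite "\<lambda>_. std_normal"
    by (simp add: product_sigma_finite_def prob_space_imp_sigma_finite prob_space_normal_density)
  let ?shift = "\<lambda>y j. if j = snd p0 then c p0 * y else 0"
  have sqnorm_insert: "column_sqnorm c (insert p0 K) j = column_sqnorm c K j + (if j = snd p0 then (c p0)\<^sup>2 else 0)" for j
    using insert.hyps by (rule column_sqnorm_insert)
  have "2 * \<kappa> * column_sqnorm c K j < 1" for j
    using insert.prems[of j] column_sqnorm_nonneg[of c K j]
    by (intro two_mult_less_one_mono[of "column_sqnorm c K j" "column_sqnorm c (insert p0 K) j"])
      (simp_all add: sqnorm_insert)
  then have inner: "(\<integral>\<^sup>+x. ennreal (exp (\<kappa> * (\<Sum>j\<in>UNIV. (P j + column_form c (insert p0 K) (x(p0 := y)) j)\<^sup>2)))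
        \<partial>PiM K (\<lambda>_. std_normal))
      = ennreal (\<Prod>j\<in>UNIV. sq_gauss_mgf \<kappa> (column_sqnorm c K j) (P j + ?shift y j))" for y
    using insert.IH[of "\<lambda>j. P j + ?shift y j"] insert.hyps by (simp add: column_form_insert_upd add_ac)
  have "(\<integral>\<^sup>+\<omega>. ennreal (exp (\<kappa> * (\<Sum>j\<in>UNIV. (P j + column_form c (insert p0 K) \<omega> j)\<^sup>2)))
        \<partial>PiM (insert p0 K) (\<lambda>_. std_normal))
      = (\<integral>\<^sup>+y. ennreal (\<Prod>j\<in>UNIV. sq_gauss_mgf \<kappa> (column_sqnorm c K j) (P j + ?shift y j)) \<partial>std_normal)"
    using insert.hyps by (simp add: product_nn_integral_insert_rev inner)
  also have "\<dots> = ennreal (\<Prod>j\<in>UNIV. sq_gauss_mgf \<kappa> (column_sqnorm c (insert p0 K) j) (P j))"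
    unfolding sqnorm_insert using insert.prems[unfolded sqnorm_insert]
    by (rule nn_integral_prod_sq_gauss_mgf_shift[OF column_sqnorm_nonneg])
  finally show ?case .
qed

definition comb_sqnorm :: "nat \<Rightarrow> (nat \<Rightarrow> real) \<Rightarrow> (nat \<times> 'd::finite \<Rightarrow> real) \<Rightarrow> real" where
  "comb_sqnorm N \<alpha> \<omega> = (\<Sum>j\<in>UNIV. (\<Sum>k<N. \<alpha> k * \<omega> (k, j))\<^sup>2)"

lemma column_filter_rows:
  "{p \<in> {..<N} \<times> UNIV. snd p = j} = (\<lambda>k. (k, j)) ` {..<N}"
  by auto

lemma comb_sqnorm_eq_column_forms:
  "comb_sqnorm N \<alpha> \<omega> = (\<Sum>j\<in>UNIV. (column_form (\<alpha> \<circ> fst) ({..<N} \<times> UNIV) \<omega> j)\<^sup>2)"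
  by (simp add: comb_sqnorm_def column_form_def column_filter_rows sum.reindex inj_on_def)

lemma column_sqnorm_rows:
  "column_sqnorm (\<alpha> \<circ> fst) ({..<N} \<times> UNIV) j = (\<Sum>k<N. (\<alpha> k)\<^sup>2)"
  by (simp add: column_sqnorm_def column_filter_rows sum.reindex inj_on_def)

lemma measurable_comb_sqnorm [measurable]:
  "comb_sqnorm N \<alpha> \<in> borel_measurable (PiM ({..<N} \<times> UNIV) (\<lambda>_. std_normal))"
  unfolding comb_sqnorm_eq_column_forms[abs_def] by measurable

lemma nn_integral_exp_comb_sqnorm:
  assumes "2 * \<kappa> * (\<Sum>k<N. (\<alpha> k)\<^sup>2) < 1"
  shows "(\<integral>\<^sup>+\<omega>. ennreal (exp (\<kappa> * comb_sqnorm N \<alpha> \<omega>)) \<partial>PiM ({..<N} \<times> (UNIV :: 'd::finite set)) (\<lambda>_. std_normal))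
       = ennreal ((1 - 2 * \<kappa> * (\<Sum>k<N. (\<alpha> k)\<^sup>2)) powr (- real CARD('d) / 2))"
proof -
  have "sq_gauss_mgf \<kappa> (\<Sum>k<N. (\<alpha> k)\<^sup>2) 0 = (1 - 2 * \<kappa> * (\<Sum>k<N. (\<alpha> k)\<^sup>2)) powr (- 1 / 2)"
    using assms by (simp add: sq_gauss_mgf_def powr_minus_divide powr_half_sqrt)
  then show ?thesis
    using nn_integral_exp_column_forms[of "{..<N} \<times> (UNIV :: 'd set)" \<kappa> "\<alpha> \<circ> fst" "\<lambda>_. 0"] assms
    by (simp add: column_sqnorm_rows comb_sqnorm_eq_column_forms powr_realpow' powr_powr flip: powr_realpow)
qed

lemma emeasure_less_squared_le:
  assumes [measurable]: "X \<in> borel_measurable M" "Y \<in> borel_measurable M" and "t \<ge> 0"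
  shows "(emeasure M {x \<in> space M. X x < Y x})\<^sup>2
       \<le> (\<integral>\<^sup>+x. ennreal (exp (- 2 * t * X x)) \<partial>M) * (\<integral>\<^sup>+x. ennreal (exp (2 * t * Y x)) \<partial>M)"
proof -
  have "emeasure M {x \<in> space M. X x < Y x}
      \<le> (\<integral>\<^sup>+x. ennreal (exp (- t * X x)) * ennreal (exp (t * Y x)) \<partial>M)"
  proof -
    have "indicator {x \<in> space M. X x < Y x} x \<le> ennreal (exp (- t * X x)) * ennreal (exp (t * Y x))" for x
      using \<open>t \<ge> 0\<close> by (auto simp: indicator_def mult_exp_exp simp flip: ennreal_mult' intro!: ennreal_leI mult_left_mono)
    then have "(\<integral>\<^sup>+x. indicator {x \<in> space M. X x < Y x} x \<partial>M)
        \<le> (\<integral>\<^sup>+x. ennreal (exp (- t * X x)) * ennreal (exp (t * Y x)) \<partial>M)"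
      by (intro nn_integral_mono)
    then show ?thesis by simp
  qed
  then have "(emeasure M {x \<in> space M. X x < Y x})\<^sup>2
      \<le> (\<integral>\<^sup>+x. ennreal (exp (- t * X x)) * ennreal (exp (t * Y x)) \<partial>M)\<^sup>2"
    by (rule power_mono) simp
  also have "\<dots> \<le> (\<integral>\<^sup>+x. ennreal (exp (- t * X x)) ^ 2 \<partial>M) * (\<integral>\<^sup>+x. ennreal (exp (t * Y x)) ^ 2 \<partial>M)"
    by (rule Cauchy_Schwarz_nn_integral) measurable
  also have "\<dots> = (\<integral>\<^sup>+x. ennreal (exp (- 2 * t * X x)) \<partial>M) * (\<integral>\<^sup>+x. ennreal (exp (2 * t * Y x)) \<partial>M)"
  proof -
    have "ennreal (exp a) ^ 2 = ennreal (exp (2 * a))" for a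
      by (simp only: ennreal_power[OF exp_ge_zero] exp_double)
    then show ?thesis by (simp only: mult.assoc mult_minus_left mult_minus_right)
  qed
  finally show ?thesis .
qed

lemma measure_comb_sqnorm_less_squared_le:
  fixes N :: nat and \<alpha> \<beta> :: "nat \<Rightarrow> real" and t :: real
  defines "M \<equiv> PiM ({..<N} \<times> (UNIV :: 'd::finite set)) (\<lambda>_. std_normal)"
  assumes "t \<ge> 0" and "4 * t * (\<Sum>k<N. (\<beta> k)\<^sup>2) < 1"
  shows "(measure M {\<omega> \<in> space M. comb_sqnorm N \<alpha> \<omega> < comb_sqnorm N \<beta> \<omega>})\<^sup>2
       \<le> ((1 + 4 * t * (\<Sum>k<N. (\<alpha> k)\<^sup>2)) * (1 - 4 * t * (\<Sum>k<N. (\<beta> k)\<^sup>2))) powr (- real CARD('d) / 2)"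
proof -
  interpret prob_space M
    unfolding M_def by (intro prob_space_PiM prob_space_normal_density) simp
  define a where "a = 1 + 4 * t * (\<Sum>k<N. (\<alpha> k)\<^sup>2)"
  define b where "b = 1 - 4 * t * (\<Sum>k<N. (\<beta> k)\<^sup>2)"
  have "a > 0" "b > 0"
    using assms(2,3) by (simp_all add: a_def b_def add_pos_nonneg sum_nonneg)
  have "(\<integral>\<^sup>+\<omega>. ennreal (exp (- 2 * t * comb_sqnorm N \<alpha> \<omega>)) \<partial>M) = ennreal (a powr (- real CARD('d) / 2))"
    using nn_integral_exp_comb_sqnorm[of "- 2 * t" \<alpha> N] \<open>a > 0\<close> by (simp add: M_def a_def)
  moreover have "(\<integral>\<^sup>+\<omega>. ennreal (exp (2 * t * comb_sqnorm N \<beta> \<omega>)) \<partial>M) = ennreal (b powr (- real CARD('d) / 2))"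
    using nn_integral_exp_comb_sqnorm[of "2 * t" \<beta> N] \<open>b > 0\<close> by (simp add: M_def b_def)
  moreover have "(emeasure M {\<omega> \<in> space M. comb_sqnorm N \<alpha> \<omega> < comb_sqnorm N \<beta> \<omega>})\<^sup>2
      \<le> (\<integral>\<^sup>+\<omega>. ennreal (exp (- 2 * t * comb_sqnorm N \<alpha> \<omega>)) \<partial>M)
        * (\<integral>\<^sup>+\<omega>. ennreal (exp (2 * t * comb_sqnorm N \<beta> \<omega>)) \<partial>M)"
    using assms(2) unfolding M_def by (intro emeasure_less_squared_le) simp_all
  ultimately show ?thesis
    using \<open>a > 0\<close> \<open>b > 0\<close>
    by (simp add: emeasure_eq_measure ennreal_power powr_mult a_def b_def flip: ennreal_mult)
qed

(* t maximises (1 + 4 t L) (1 - 4 t H), with maximum (L + H)^2 / (4 L H). *)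
lemma chernoff_parameter_bound:
  fixes L H a b :: real
  defines "t \<equiv> (L - H) / (8 * L * H)"
  assumes "0 < H" "H < L" and "L \<le> a" "b \<le> H"
  shows "t \<ge> 0" and "4 * t * b < 1" and "(L + H)\<^sup>2 / (4 * L * H) \<le> (1 + 4 * t * a) * (1 - 4 * t * b)"
proof -
  have "L > 0" "t > 0"
    using assms by (simp_all add: t_def)
  then show "t \<ge> 0" by simp
  have tL: "4 * t * L = (L - H) / (2 * H)" and tH: "4 * t * H = (L - H) / (2 * L)"
    using assms \<open>L > 0\<close> by (simp_all add: t_def field_simps)
  have "4 * t * b \<le> 4 * t * H" "4 * t * L \<le> 4 * t * a"
    using \<open>L \<le> a\<close> \<open>b \<le> H\<close> \<open>t > 0\<close> by simp_all
  moreover have "4 * t * H < 1"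
    using assms \<open>L > 0\<close> by (simp add: tH)
  ultimately show "4 * t * b < 1" by linarith
  have "(L + H)\<^sup>2 / (4 * L * H) = (1 + 4 * t * L) * (1 - 4 * t * H)"
    using assms \<open>L > 0\<close> by (simp add: tL tH field_simps power2_eq_square)
  also have "\<dots> \<le> (1 + 4 * t * a) * (1 - 4 * t * b)"
    using \<open>4 * t * b \<le> 4 * t * H\<close> \<open>4 * t * L \<le> 4 * t * a\<close> \<open>4 * t * H < 1\<close> \<open>t > 0\<close> \<open>L > 0\<close>
    by (intro mult_mono) simp_all
  finally show "(L + H)\<^sup>2 / (4 * L * H) \<le> (1 + 4 * t * a) * (1 - 4 * t * b)" .
qed

lemma measure_comb_sqnorm_less:
  fixes N :: nat and \<alpha> \<beta> :: "nat \<Rightarrow> real" and L H :: real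
  defines "M \<equiv> PiM ({..<N} \<times> (UNIV :: 'd::finite set)) (\<lambda>_. std_normal)"
  assumes "L \<le> (\<Sum>k<N. (\<alpha> k)\<^sup>2)" and "(\<Sum>k<N. (\<beta> k)\<^sup>2) \<le> H" and "0 < H" and "H < L"
  shows "measure M {\<omega> \<in> space M. comb_sqnorm N \<alpha> \<omega> < comb_sqnorm N \<beta> \<omega>}
       \<le> (4 * L * H / (L + H)\<^sup>2) powr (real CARD('d) / 4)"
proof -
  define t where "t = (L - H) / (8 * L * H)"
  define \<rho> where "\<rho> = 4 * L * H / (L + H)\<^sup>2"
  define p where "p = measure M {\<omega> \<in> space M. comb_sqnorm N \<alpha> \<omega> < comb_sqnorm N \<beta> \<omega>}"
  note t = chernoff_parameter_bound[OF assms(4,5,2,3), folded t_def]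
  have "\<rho> > 0" "L > 0"
    using assms by (simp_all add: \<rho>_def)
  have "p\<^sup>2 \<le> ((1 + 4 * t * (\<Sum>k<N. (\<alpha> k)\<^sup>2)) * (1 - 4 * t * (\<Sum>k<N. (\<beta> k)\<^sup>2))) powr (- real CARD('d) / 2)"
    unfolding p_def M_def using t(1,2) by (rule measure_comb_sqnorm_less_squared_le)
  also have "\<dots> \<le> (1 / \<rho>) powr (- real CARD('d) / 2)"
    using t(3) \<open>L > 0\<close> assms(4) by (intro powr_mono2') (simp_all add: \<rho>_def)
  also have "\<dots> = (\<rho> powr (real CARD('d) / 4))\<^sup>2"
    using \<open>\<rho> > 0\<close> by (simp add: powr_minus powr_divide power2_eq_square flip: powr_add)
  finally have "p \<le> \<rho> powr (real CARD('d) / 4)"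
    by (rule power2_le_imp_le) simp
  then show ?thesis
    by (simp only: p_def \<rho>_def)
qed

definition sample_coef :: "real \<Rightarrow> (nat \<Rightarrow> nat) \<Rightarrow> nat \<Rightarrow> nat \<Rightarrow> real" where
  "sample_coef \<sigma> z l k = (if k = z l - 1 then 1 else 0) + (if k = l + 1 then \<sigma> else 0)"

definition residual_coef :: "real \<Rightarrow> (nat \<Rightarrow> nat) \<Rightarrow> nat set \<Rightarrow> nat \<Rightarrow> nat \<Rightarrow> real" where
  "residual_coef \<sigma> z C i k = sample_coef \<sigma> z i k - (\<Sum>l\<in>C. sample_coef \<sigma> z l k) / real (card C)"

lemma sample_component:
  assumes "z l - 1 < N" "l + 1 < N"
  shows "sample \<sigma> z \<omega> l $ j = (\<Sum>k<N. sample_coef \<sigma> z l k * \<omega> (k, j))"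
proof -
  have "(\<Sum>k<N. (if k = a then c else 0) * \<omega> (k, j)) = c * \<omega> (a, j)" if "a < N" for a c
    using that by (simp add: if_distrib[of "\<lambda>x. x * _"] sum.delta' cong: if_cong)
  then show ?thesis
    using assms by (simp add: sample_def center_def noise_def sample_coef_def distrib_right sum.distrib)
qed

lemma sum_split_first_two:
  fixes f :: "nat \<Rightarrow> 'a::comm_monoid_add"
  shows "(\<Sum>k<n + 2. f k) = f 0 + f 1 + (\<Sum>l\<in>{1..n}. f (l + 1))"
  by (induction n) (simp_all add: add.assoc add.left_commute)

lemma norm_vec_squared: "(norm (v :: real ^ 'd))\<^sup>2 = (\<Sum>j\<in>UNIV. (v $ j)\<^sup>2)"
  unfolding power2_norm_eq_inner inner_vec_def by (simp add: power2_eq_square)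

lemma residual_sqnorm_eq:
  assumes "C \<subseteq> {1..n}" "i \<in> {1..n}" "\<forall>l\<in>{1..n}. z l \<in> {1, 2}"
  shows "(norm (sample \<sigma> z \<omega> i - centroid (sample \<sigma> z \<omega>) C))\<^sup>2
       = comb_sqnorm (n + 2) (residual_coef \<sigma> z C i) \<omega>"
proof -
  define N where "N = n + 2"
  have sample: "sample \<sigma> z \<omega> l $ j = (\<Sum>k<N. sample_coef \<sigma> z l k * \<omega> (k, j))" if "l \<in> {1..n}" for l j
  proof -
    have "z l \<in> {1, 2}" using that assms(3) by blast
    then show ?thesis using that by (intro sample_component) (auto simp: N_def)
  qed
  have centroid: "centroid (sample \<sigma> z \<omega>) C $ j
      = (\<Sum>k<N. (\<Sum>l\<in>C. sample_coef \<sigma> z l k) / real (card C) * \<omega> (k, j))" for j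
  proof -
    have "centroid (sample \<sigma> z \<omega>) C $ j
        = (\<Sum>l\<in>C. \<Sum>k<N. sample_coef \<sigma> z l k * \<omega> (k, j)) / real (card C)"
      using assms(1) by (simp add: centroid_def sum_component sample subset_eq)
    then show ?thesis
      by (simp add: sum.swap[of _ C] sum_divide_distrib sum_distrib_right)
  qed
  have "(sample \<sigma> z \<omega> i - centroid (sample \<sigma> z \<omega>) C) $ j
      = (\<Sum>k<N. residual_coef \<sigma> z C i k * \<omega> (k, j))" for j
    using assms(2) by (simp add: sample centroid residual_coef_def left_diff_distrib sum_subtractf)
  then show ?thesis
    by (simp add: norm_vec_squared comb_sqnorm_def N_def)
qed

lemma sum_indicator_diff_squared:
  fixes A C :: "'a set"
  assumes "finite A" "i \<in> A" "C \<subseteq> A" "C \<noteq> {}"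
  shows "(\<Sum>l\<in>A. (of_bool (l = i) - of_bool (l \<in> C) / real (card C))\<^sup>2)
       = 1 + (if i \<in> C then - 1 else 1) / real (card C)"
proof -
  define c where "c = real (card C)"
  have "c > 0"
    using assms finite_subset by (simp add: c_def card_gt_0_iff) blast
  have "(of_bool (l = i) - of_bool (l \<in> C) / c)\<^sup>2
      = of_bool (l = i) - 2 * of_bool (l = i \<and> i \<in> C) / c + of_bool (l \<in> C) / c\<^sup>2" for l
    using \<open>c > 0\<close> by (auto simp: power2_eq_square field_simps)
  then have "(\<Sum>l\<in>A. (of_bool (l = i) - of_bool (l \<in> C) / c)\<^sup>2)
      = 1 - 2 * of_bool (i \<in> C) / c + c / c\<^sup>2"
    using assms by (simp add: sum.distrib sum_subtractf Int_absorb1 Int_absorb2 c_def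
        flip: sum_divide_distrib)
  also have "\<dots> = 1 + (if i \<in> C then - 1 else 1) / c"
    using \<open>c > 0\<close> by (simp add: power2_eq_square field_simps)
  finally show ?thesis by (simp add: c_def)
qed

lemma sample_coef_eqs:
  assumes "z l \<in> {1, 2}" "1 \<le> l"
  shows "sample_coef \<sigma> z l 0 = of_bool (z l = 1)"
    and "sample_coef \<sigma> z l 1 = 1 - of_bool (z l = 1)"
    and "1 \<le> m \<Longrightarrow> sample_coef \<sigma> z l (m + 1) = \<sigma> * of_bool (l = m)"
  using assms by (auto simp: sample_coef_def)

lemma residual_coef_one:
  assumes "C \<subseteq> {1..n}" "C \<noteq> {}" "i \<in> {1..n}" "\<forall>l\<in>{1..n}. z l \<in> {1, 2}"
  shows "residual_coef \<sigma> z C i 1 = - residual_coef \<sigma> z C i 0"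
proof -
  have "card C > 0"
    using assms(1,2) finite_subset by (auto simp: card_gt_0_iff)
  have coef: "sample_coef \<sigma> z l 0 = of_bool (z l = 1)" "sample_coef \<sigma> z l 1 = 1 - of_bool (z l = 1)"
    if "l \<in> {1..n}" for l
    using sample_coef_eqs that assms(4) by auto
  have "(\<Sum>l\<in>C. sample_coef \<sigma> z l 0) = (\<Sum>l\<in>C. of_bool (z l = 1))"
    "(\<Sum>l\<in>C. sample_coef \<sigma> z l 1) = (\<Sum>l\<in>C. 1 - of_bool (z l = 1))"
    using assms(1) coef by (meson sum.cong subsetD)+
  with coef[OF assms(3)] show ?thesis
    unfolding residual_coef_def
    by (simp only:) (use \<open>card C > 0\<close> in \<open>simp add: sum_subtractf field_simps\<close>)
qed

lemma residual_coef_noise: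
  assumes "C \<subseteq> {1..n}" "i \<in> {1..n}" "\<forall>l\<in>{1..n}. z l \<in> {1, 2}" and "m \<in> {1..n}"
  shows "residual_coef \<sigma> z C i (m + 1) = \<sigma> * (of_bool (m = i) - of_bool (m \<in> C) / real (card C))"
proof -
  have coef: "sample_coef \<sigma> z l (m + 1) = \<sigma> * of_bool (l = m)" if "l \<in> {1..n}" for l
    using sample_coef_eqs(3) that assms(3,4) by auto
  have "finite C"
    using assms(1) finite_subset by blast
  have "(\<Sum>l\<in>C. sample_coef \<sigma> z l (m + 1)) = (\<Sum>l\<in>C. \<sigma> * of_bool (l = m))"
    using assms(1) coef by (meson sum.cong subsetD)
  with coef[OF assms(2)] show ?thesis
    unfolding residual_coef_def
    by (simp only:) (use \<open>finite C\<close> in \<open>auto simp: right_diff_distrib simp flip: sum_distrib_left\<close>)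
qed

lemma residual_coef_sqnorm:
  assumes "C \<subseteq> {1..n}" "C \<noteq> {}" "i \<in> {1..n}" "\<forall>l\<in>{1..n}. z l \<in> {1, 2}"
  shows "(\<Sum>k<n + 2. (residual_coef \<sigma> z C i k)\<^sup>2)
       = 2 * (residual_coef \<sigma> z C i 0)\<^sup>2 + \<sigma>\<^sup>2 * (1 + (if i \<in> C then - 1 else 1) / real (card C))"
proof -
  have "(\<Sum>k<n + 2. (residual_coef \<sigma> z C i k)\<^sup>2)
      = 2 * (residual_coef \<sigma> z C i 0)\<^sup>2
        + \<sigma>\<^sup>2 * (\<Sum>m\<in>{1..n}. (of_bool (m = i) - of_bool (m \<in> C) / real (card C))\<^sup>2)"
    unfolding sum_split_first_two using residual_coef_one[OF assms] residual_coef_noise[OF assms(1,3,4)]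
    by (simp add: power_mult_distrib sum_distrib_left)
  then show ?thesis
    using assms by (simp add: sum_indicator_diff_squared)
qed

lemma residual_coef_center_bound:
  assumes "finite C" "i \<in> C"
  shows "\<bar>residual_coef \<sigma> z C i 0\<bar> \<le> 1 - 1 / real (card C)"
proof -
  define e where "e l = sample_coef \<sigma> z l 0" for l
  define c where "c = real (card C)"
  have "card C \<ge> 1"
    using assms by (metis One_nat_def Suc_leI card_gt_0_iff empty_iff)
  then have "c \<ge> 1" by (simp add: c_def)
  have e01: "\<bar>e i - e l\<bar> \<le> 1" for l
    by (simp add: e_def sample_coef_def)
  have "residual_coef \<sigma> z C i 0 = (\<Sum>l\<in>C. e i - e l) / c"
    using \<open>c \<ge> 1\<close> by (simp add: residual_coef_def e_def sum_subtractf c_def field_simps)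
  also have "\<dots> = (\<Sum>l\<in>C - {i}. e i - e l) / c"
    using assms by (simp add: sum.remove)
  also have "\<bar>\<dots>\<bar> \<le> (\<Sum>l\<in>C - {i}. \<bar>e i - e l\<bar>) / c"
    using \<open>c \<ge> 1\<close> by (simp add: divide_right_mono sum_abs)
  also have "\<dots> \<le> (c - 1) / c"
    using assms e01 sum_mono[of "C - {i}" "\<lambda>l. \<bar>e i - e l\<bar>" "\<lambda>_. 1"] \<open>c \<ge> 1\<close>
    by (intro divide_right_mono) (auto simp: c_def)
  finally show ?thesis
    using \<open>c \<ge> 1\<close> by (simp add: c_def diff_divide_distrib)
qed

definition own_residual_bound :: "real \<Rightarrow> real \<Rightarrow> real" where
  "own_residual_bound \<sigma> m = \<sigma>\<^sup>2 * (1 - 2 / m) + 2 * (1 - 2 / m)\<^sup>2"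

definition other_residual_bound :: "real \<Rightarrow> real \<Rightarrow> real" where
  "other_residual_bound \<sigma> m = \<sigma>\<^sup>2 * (1 + 2 / m)"

lemma residual_coef_sqnorm_other_ge:
  assumes "C \<subseteq> {1..n}" "C \<noteq> {}" "i \<in> {1..n}" "i \<notin> C" "\<forall>l\<in>{1..n}. z l \<in> {1, 2}"
    and "real (card C) < m / 2"
  shows "other_residual_bound \<sigma> m \<le> (\<Sum>k<n + 2. (residual_coef \<sigma> z C i k)\<^sup>2)"
proof -
  have "card C > 0"
    using assms(1,2) finite_subset by (auto simp: card_gt_0_iff)
  then have "2 / m \<le> 1 / real (card C)"
    using assms(6) by (simp add: field_simps)
  then have "other_residual_bound \<sigma> m \<le> \<sigma>\<^sup>2 * (1 + 1 / real (card C))"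
    by (simp add: other_residual_bound_def mult_left_mono)
  then show ?thesis
    unfolding residual_coef_sqnorm[OF assms(1-3,5)] using assms(4) by (simp add: add_increasing)
qed

lemma residual_coef_sqnorm_own_le:
  assumes "C \<subseteq> {1..n}" "i \<in> C" "\<forall>l\<in>{1..n}. z l \<in> {1, 2}" and "real (card C) < m / 2"
  shows "(\<Sum>k<n + 2. (residual_coef \<sigma> z C i k)\<^sup>2) \<le> own_residual_bound \<sigma> m"
proof -
  define c where "c = real (card C)"
  have "finite C" using assms(1) finite_subset by blast
  then have "c \<ge> 1"
    using assms(2) by (metis One_nat_def Suc_leI card_gt_0_iff c_def empty_iff of_nat_1 of_nat_mono)
  then have "0 \<le> 1 - 1 / c" "1 - 1 / c \<le> 1 - 2 / m"
    using assms(4) by (simp_all add: c_def field_simps)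
  moreover have "(residual_coef \<sigma> z C i 0)\<^sup>2 \<le> (1 - 1 / c)\<^sup>2"
    using residual_coef_center_bound[OF \<open>finite C\<close> assms(2)]
    by (metis abs_ge_zero c_def power2_abs power_mono)
  ultimately have "(residual_coef \<sigma> z C i 0)\<^sup>2 \<le> (1 - 2 / m)\<^sup>2"
    using power_mono[of "1 - 1 / c" "1 - 2 / m" 2] by linarith
  then have "\<sigma>\<^sup>2 * (1 - 1 / c) + 2 * (residual_coef \<sigma> z C i 0)\<^sup>2 \<le> own_residual_bound \<sigma> m"
    unfolding own_residual_bound_def
    using \<open>1 - 1 / c \<le> 1 - 2 / m\<close> by (intro add_mono mult_left_mono) auto
  moreover have "C \<noteq> {}" "i \<in> {1..n}" using assms(1,2) by auto
  ultimately show ?thesis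
    unfolding residual_coef_sqnorm[OF assms(1) \<open>C \<noteq> {}\<close> \<open>i \<in> {1..n}\<close> assms(3)]
    using assms(2) by (simp add: c_def)
qed

lemma residual_bounds_gap:
  assumes "m > 2" "\<beta> > 1" "\<sigma> = \<beta> * (m - 2) / (sqrt 2 * sqrt m)"
  shows "0 < own_residual_bound \<sigma> m" "own_residual_bound \<sigma> m < other_residual_bound \<sigma> m"
proof -
  have "2 * m * \<sigma>\<^sup>2 = \<beta>\<^sup>2 * (m - 2)\<^sup>2"
    using assms by (simp add: power_divide power_mult_distrib)
  moreover have "other_residual_bound \<sigma> m - own_residual_bound \<sigma> m = (2 * (2 * m * \<sigma>\<^sup>2) - 2 * (m - 2)\<^sup>2) / m\<^sup>2"
    using assms(1) by (simp add: own_residual_bound_def other_residual_bound_def field_simps power2_eq_square)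
  ultimately have "other_residual_bound \<sigma> m - own_residual_bound \<sigma> m = 2 * (\<beta>\<^sup>2 - 1) * (m - 2)\<^sup>2 / m\<^sup>2"
    by (simp add: algebra_simps)
  moreover have "\<beta>\<^sup>2 > 1"
    using assms(2) by (simp add: one_less_power)
  ultimately have "other_residual_bound \<sigma> m - own_residual_bound \<sigma> m > 0"
    using assms(1) by simp
  then show "own_residual_bound \<sigma> m < other_residual_bound \<sigma> m"
    by simp
  show "0 < own_residual_bound \<sigma> m"
    using assms(1) by (simp add: own_residual_bound_def add_nonneg_pos)
qed

lemma rate_eq_residual_bounds:
  fixes n :: nat and q \<sigma> :: real
  defines "m \<equiv> sqrt n * q + n"
  assumes "m > 2"
  shows "\<sigma>\<^sup>2 * (sqrt n * q + n - 2) * (sqrt n * q + n) * (sqrt n * q + n + 2)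
           * (sqrt n * (\<sigma>\<^sup>2 + 2) * (sqrt n + q) - 4)
         / (n * \<sigma>\<^sup>2 * (sqrt n + q)\<^sup>2 + (sqrt n * q + n - 2)\<^sup>2)\<^sup>2
       = 4 * other_residual_bound \<sigma> m * own_residual_bound \<sigma> m
         / (other_residual_bound \<sigma> m + own_residual_bound \<sigma> m)\<^sup>2"
proof -
  define s where "s = \<sigma>\<^sup>2"
  have "s \<ge> 0" by (simp add: s_def)
  have linear: "sqrt n * (s + 2) * (sqrt n + q) = (s + 2) * m"
    and quadratic: "n * s * (sqrt n + q)\<^sup>2 = s * m\<^sup>2"
    by (simp_all add: m_def algebra_simps power2_eq_square)
  define D where "D = s * m\<^sup>2 + (m - 2)\<^sup>2"
  have sum: "other_residual_bound \<sigma> m + own_residual_bound \<sigma> m = 2 * D / m\<^sup>2"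
    using assms(2) by (simp add: own_residual_bound_def other_residual_bound_def s_def D_def
        field_simps power2_eq_square)
  have product: "4 * other_residual_bound \<sigma> m * own_residual_bound \<sigma> m
      = 4 * s * (m + 2) * (m - 2) * ((s + 2) * m - 4) / m ^ 3"
    using assms(2) by (simp add: own_residual_bound_def other_residual_bound_def s_def
        field_simps power2_eq_square power3_eq_cube)
  have "D > 0"
    using assms(2) \<open>s \<ge> 0\<close> by (simp add: D_def add_nonneg_pos)
  then show ?thesis
    unfolding m_def[symmetric] s_def[symmetric] linear quadratic D_def[symmetric] sum product
    using assms(2) by (simp add: field_simps power2_eq_square power3_eq_cube)
qed

lemma gauss_space_eq: "gauss_space n = PiM ({..<n + 2} \<times> UNIV) (\<lambda>_. std_normal)"
  by (simp add: gauss_space_def)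

lemma measurable_residual_sqnorm:
  assumes "C \<subseteq> {1..n}" "i \<in> {1..n}" "\<forall>l\<in>{1..n}. z l \<in> {1, 2}"
  shows "(\<lambda>\<omega>. (norm (sample \<sigma> z \<omega> i - centroid (sample \<sigma> z \<omega>) C))\<^sup>2) \<in> borel_measurable (gauss_space n)"
  unfolding residual_sqnorm_eq[OF assms] gauss_space_eq by measurable

lemma approx_balanced_sym: "approx_balanced n q C1 C2 \<Longrightarrow> approx_balanced n q C2 C1"
  unfolding approx_balanced_def by (auto simp: insert_commute)

lemma approx_balancedD:
  assumes "approx_balanced n q C1 C2"
  shows "C1 \<subseteq> {1..n}" "C2 = {1..n} - C1" "C1 \<noteq> {}" "real (card C1) < (sqrt n * q + n) / 2"
proof -
  have "sqrt (real n / 4) = sqrt n / 2"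
    by (simp add: real_sqrt_divide)
  moreover have "C1 \<union> C2 = {1..n}" "C1 \<inter> C2 = {}" "card C1 > 2"
    "real (card C1) < real n / 2 + q * sqrt (real n / 4)"
    using assms unfolding approx_balanced_def by auto
  ultimately show "C1 \<subseteq> {1..n}" "C2 = {1..n} - C1" "C1 \<noteq> {}" "real (card C1) < (sqrt n * q + n) / 2"
    by (auto simp: field_simps)
qed

lemma misassignment_measure_le:
  fixes n :: nat and q \<sigma> :: real
  defines "M \<equiv> gauss_space n :: (nat \<times> 'd::finite \<Rightarrow> real) measure"
    and "m \<equiv> sqrt n * q + n"
  defines "L \<equiv> other_residual_bound \<sigma> m" and "H \<equiv> own_residual_bound \<sigma> m"
  assumes "\<forall>l\<in>{1..n}. z l \<in> {1, 2}" and "approx_balanced n q C ({1..n} - C)" "i \<in> C"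
    and "0 < H" "H < L"
  defines "A \<equiv> {\<omega> \<in> space M. (norm (sample \<sigma> z \<omega> i - centroid (sample \<sigma> z \<omega>) ({1..n} - C)))\<^sup>2
                            < (norm (sample \<sigma> z \<omega> i - centroid (sample \<sigma> z \<omega>) C))\<^sup>2}"
  shows "A \<in> sets M" and "measure M A \<le> (4 * L * H / (L + H)\<^sup>2) powr (real CARD('d) / 4)"
proof -
  note C = approx_balancedD[OF assms(6)] and C' = approx_balancedD[OF approx_balanced_sym[OF assms(6)]]
  have "i \<in> {1..n}" "i \<notin> {1..n} - C" using C(1) assms(7) by auto
  show "A \<in> sets M"
    unfolding A_def M_def using C(1) \<open>i \<in> {1..n}\<close> assms(5)
    by (intro borel_measurable_less measurable_residual_sqnorm) auto
  have "L \<le> (\<Sum>k<n + 2. (residual_coef \<sigma> z ({1..n} - C) i k)\<^sup>2)"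
    unfolding L_def m_def using C'(3,4) assms(5) \<open>i \<in> {1..n}\<close> \<open>i \<notin> {1..n} - C\<close>
    by (intro residual_coef_sqnorm_other_ge) auto
  moreover have "(\<Sum>k<n + 2. (residual_coef \<sigma> z C i k)\<^sup>2) \<le> H"
    unfolding H_def m_def using C(1,4) assms(5,7) by (intro residual_coef_sqnorm_own_le)
  ultimately have "measure M {\<omega> \<in> space M.
      comb_sqnorm (n + 2) (residual_coef \<sigma> z ({1..n} - C) i) \<omega> < comb_sqnorm (n + 2) (residual_coef \<sigma> z C i) \<omega>}
       \<le> (4 * L * H / (L + H)\<^sup>2) powr (real CARD('d) / 4)"
    unfolding M_def gauss_space_eq using assms(8,9) by (intro measure_comb_sqnorm_less)
  then show "measure M A \<le> (4 * L * H / (L + H)\<^sup>2) powr (real CARD('d) / 4)"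
    unfolding A_def
    by (simp only: residual_sqnorm_eq[OF Diff_subset \<open>i \<in> {1..n}\<close> assms(5)]
        residual_sqnorm_eq[OF C(1) \<open>i \<in> {1..n}\<close> assms(5)])
qed

lemma lloyd_failure_eq_misassignments:
  fixes x :: "'b \<Rightarrow> nat \<Rightarrow> 'a::real_normed_vector"
  shows "{\<omega> \<in> S. \<exists>C1 C2. approx_balanced n q C1 C2 \<and> \<not> lloyd_fixed_point (x \<omega>) C1 C2}
       = (\<Union>(C, i) \<in> {(C, i). approx_balanced n q C ({1..n} - C) \<and> i \<in> C}.
            {\<omega> \<in> S. (norm (x \<omega> i - centroid (x \<omega>) ({1..n} - C)))\<^sup>2 < (norm (x \<omega> i - centroid (x \<omega>) C))\<^sup>2})"
    (is "?E = (\<Union>p\<in>?I. ?F p)")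
proof
  show "?E \<subseteq> (\<Union>p\<in>?I. ?F p)"
  proof
    fix \<omega> assume "\<omega> \<in> ?E"
    then obtain C1 C2 where "\<omega> \<in> S" and bal: "approx_balanced n q C1 C2"
      and "\<not> lloyd_fixed_point (x \<omega>) C1 C2"
      by blast
    have member: "\<omega> \<in> (\<Union>p\<in>?I. ?F p)"
      if "approx_balanced n q C ({1..n} - C)" "i \<in> C"
        "(norm (x \<omega> i - centroid (x \<omega>) ({1..n} - C)))\<^sup>2 < (norm (x \<omega> i - centroid (x \<omega>) C))\<^sup>2" for C i
      using that \<open>\<omega> \<in> S\<close> by blast
    have compl: "C2 = {1..n} - C1" "C1 = {1..n} - C2"
      using approx_balancedD(1,2)[OF bal] by auto
    from \<open>\<not> lloyd_fixed_point (x \<omega>) C1 C2\<close> consider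
        i where "i \<in> C1" "(norm (x \<omega> i - centroid (x \<omega>) C2))\<^sup>2 < (norm (x \<omega> i - centroid (x \<omega>) C1))\<^sup>2"
      | i where "i \<in> C2" "(norm (x \<omega> i - centroid (x \<omega>) C1))\<^sup>2 < (norm (x \<omega> i - centroid (x \<omega>) C2))\<^sup>2"
      unfolding lloyd_fixed_point_def by blast
    then show "\<omega> \<in> (\<Union>p\<in>?I. ?F p)"
    proof cases
      case 1
      with bal compl(1) member[of C1 i] show ?thesis by simp
    next
      case 2
      with approx_balanced_sym[OF bal] compl(2) member[of C2 i] show ?thesis by simp
    qed
  qed
next
  show "(\<Union>p\<in>?I. ?F p) \<subseteq> ?E"
    unfolding lloyd_fixed_point_def by fast
qed

lemma balanced_splits_subset:
  "{(C, i). approx_balanced n q C ({1..n} - C) \<and> i \<in> C} \<subseteq> Pow {1..n} \<times> {1..n}"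
  by (blast dest: approx_balancedD(1))

lemma finite_balanced_splits: "finite {(C, i). approx_balanced n q C ({1..n} - C) \<and> i \<in> C}"
  by (rule finite_subset[OF balanced_splits_subset]) simp

lemma card_balanced_splits_le:
  "card {(C, i). approx_balanced n q C ({1..n} - C) \<and> i \<in> C} \<le> 2 ^ n * n"
  using card_mono[OF _ balanced_splits_subset, of n q] by (simp add: card_cartesian_product card_Pow)

lemma measure_UNION_le_card:
  assumes "finite I" and "\<And>p. p \<in> I \<Longrightarrow> F p \<in> sets M \<and> measure M (F p) \<le> b"
  shows "(\<Union>p\<in>I. F p) \<in> sets M \<and> measure M (\<Union>p\<in>I. F p) \<le> real (card I) * b"
proof
  show "(\<Union>p\<in>I. F p) \<in> sets M"
    using assms by (intro sets.finite_UN) auto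
  have "measure M (\<Union>p\<in>I. F p) \<le> (\<Sum>p\<in>I. measure M (F p))"
    using assms by (intro measure_UNION_le) auto
  also have "\<dots> \<le> real (card I) * b"
    using assms sum_bounded_above[of I "\<lambda>p. measure M (F p)" b] by auto
  finally show "measure M (\<Union>p\<in>I. F p) \<le> real (card I) * b" .
qed

theorem corollary3p8:
  fixes n :: nat and q \<beta> \<sigma> :: real and z :: "nat \<Rightarrow> nat"
  assumes "n \<ge> 2"
    and "\<forall>i\<in>{1..n}. z i \<in> {1, 2}"
    and "\<exists>i\<in>{1..n}. z i = 1" and "\<exists>i\<in>{1..n}. z i = 2"
    and "q > 1" and "\<beta> > 1"
    and "\<sigma> = \<beta> * (sqrt n * q + n - 2) / (sqrt 2 * sqrt (sqrt n * q + n))"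
  defines "\<rho> \<equiv> \<sigma>\<^sup>2 * (sqrt n * q + n - 2) * (sqrt n * q + n) * (sqrt n * q + n + 2)
                * (sqrt n * (\<sigma>\<^sup>2 + 2) * (sqrt n + q) - 4)
              / (n * \<sigma>\<^sup>2 * (sqrt n + q)\<^sup>2 + (sqrt n * q + n - 2)\<^sup>2)\<^sup>2"
  defines "E \<equiv> {\<omega> \<in> space (gauss_space n :: (nat \<times> 'd::finite \<Rightarrow> real) measure).
                  \<exists>C1 C2. approx_balanced n q C1 C2 \<and>
                    \<not> lloyd_fixed_point (sample \<sigma> z \<omega>) C1 C2}"
  shows "E \<in> sets (gauss_space n) \<and>
         measure (gauss_space n) E \<le> 2 ^ n * real n * \<rho> powr (real CARD('d) / 4)"
proof -
  define m where "m = sqrt n * q + n"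
  define I where "I = {(C, i). approx_balanced n q C ({1..n} - C) \<and> i \<in> C}"
  have "sqrt n * q > 0" "real n \<ge> 2"
    using assms(1,5) by simp_all
  then have "m > 2"
    by (simp add: m_def)
  note gap = residual_bounds_gap[OF \<open>m > 2\<close> assms(6) assms(7)[folded m_def]]
  have "\<rho> = 4 * other_residual_bound \<sigma> m * own_residual_bound \<sigma> m
      / (other_residual_bound \<sigma> m + own_residual_bound \<sigma> m)\<^sup>2"
    using rate_eq_residual_bounds \<open>m > 2\<close> by (simp add: \<rho>_def m_def)
  then have "E \<in> sets (gauss_space n) \<and> measure (gauss_space n) E \<le> real (card I) * \<rho> powr (CARD('d) / 4)"
    unfolding E_def lloyd_failure_eq_misassignments I_def[symmetric]
    using misassignment_measure_le[OF assms(2) _ _ gap[unfolded m_def]] finite_balanced_splits[of n q]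
    by (intro measure_UNION_le_card) (auto simp: I_def m_def)
  moreover have "real (card I) \<le> 2 ^ n * real n"
    using of_nat_mono[OF card_balanced_splits_le[of n q]] by (simp add: I_def)
  then have "real (card I) * \<rho> powr (CARD('d) / 4) \<le> 2 ^ n * real n * \<rho> powr (CARD('d) / 4)"
    by (rule mult_right_mono) simp
  ultimately show ?thesis
    by (meson order.trans)
qed

end
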